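(* Let $r\ge2$, $\alpha_1,\dots,\alpha_r>0$, $m\ge1$, $f(z)=\mathrm{sgn}(z)\frac{|z|^m}{1+|z|^m}$, and consider $\dot x_1=f(x_r)-\alpha_1x_1$, $\dot x_j=x_{j-1}-\alpha_jx_j$ ($2\le j\le r$). Let $\phi=\prod_{i=1}^r\alpha_i$, $h(z)=f(z)/z$ for $z\ne0$, and $\mathcal{V}_0=(\prod_{i=2}^r\alpha_i,\prod_{i=3}^r\alpha_i,\dots,\alpha_r,1)^T$. Let $z\neq0$ with $h(z)=\phi$ (so that $z\mathcal{V}_0$ is an equilibrium). If $z>0$, then $z\mathcal{V}_0$ is asymptotically stable when $h'(z)<0$ and unstable when $h'(z)>0$. If $z<0$, then $z\mathcal{V}_0$ is asymptotically stable when $h'(z)>0$ and unstable when $h'(z)<0$.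
   Context: Unstable means not Lyapunov stable. An equilibrium $p$ is asymptotically stable if there is a neighborhood $N$ of $p$ such that solutions starting in $N$ converge to $p$ uniformly in the initial point in $N$. *)

theory Defs
  imports "HOL-Analysis.Analysis"
begin

text \<open>States of the r-dimensional system are functions nat \<Rightarrow> real of which only the
  coordinates 0..r-1 matter (index i here corresponds to x_{i+1} in the paper).\<close>

definition hillf :: "real \<Rightarrow> real \<Rightarrow> real" where
  "hillf m z = sgn z * (\<bar>z\<bar> powr m / (1 + \<bar>z\<bar> powr m))"

definition hfun :: "real \<Rightarrow> real \<Rightarrow> real" where
  "hfun m z = hillf m z / z"

definition vfield :: "nat \<Rightarrow> (nat \<Rightarrow> real) \<Rightarrow> real \<Rightarrow> (nat \<Rightarrow> real) \<Rightarrow> nat \<Rightarrow> real" where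
  "vfield r \<alpha> m x i =
     (if i = 0 then hillf m (x (r - 1)) - \<alpha> 0 * x 0 else x (i - 1) - \<alpha> i * x i)"

definition distr :: "nat \<Rightarrow> (nat \<Rightarrow> real) \<Rightarrow> (nat \<Rightarrow> real) \<Rightarrow> real" where
  "distr r x y = sqrt (\<Sum>i<r. (x i - y i)\<^sup>2)"

definition is_solution :: "nat \<Rightarrow> (nat \<Rightarrow> real) \<Rightarrow> real \<Rightarrow> (nat \<Rightarrow> real) \<Rightarrow> (real \<Rightarrow> nat \<Rightarrow> real) \<Rightarrow> bool" where
  "is_solution r \<alpha> m x0 y \<longleftrightarrow>
     (\<forall>i<r. y 0 i = x0 i) \<and>
     (\<forall>t\<ge>0. \<forall>i<r. ((\<lambda>s. y s i) has_real_derivative vfield r \<alpha> m (y t) i) (at t within {0..}))"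

definition lyap_stable :: "nat \<Rightarrow> (nat \<Rightarrow> real) \<Rightarrow> real \<Rightarrow> (nat \<Rightarrow> real) \<Rightarrow> bool" where
  "lyap_stable r \<alpha> m p \<longleftrightarrow>
     (\<forall>\<epsilon>>0. \<exists>\<delta>>0. \<forall>x0 y. distr r x0 p < \<delta> \<longrightarrow> is_solution r \<alpha> m x0 y \<longrightarrow>
        (\<forall>t\<ge>0. distr r (y t) p < \<epsilon>))"

definition unstable :: "nat \<Rightarrow> (nat \<Rightarrow> real) \<Rightarrow> real \<Rightarrow> (nat \<Rightarrow> real) \<Rightarrow> bool" where
  "unstable r \<alpha> m p \<longleftrightarrow> \<not> lyap_stable r \<alpha> m p"

definition asymp_stable :: "nat \<Rightarrow> (nat \<Rightarrow> real) \<Rightarrow> real \<Rightarrow> (nat \<Rightarrow> real) \<Rightarrow> bool" where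
  "asymp_stable r \<alpha> m p \<longleftrightarrow>
     (\<exists>\<delta>>0. \<forall>\<epsilon>>0. \<exists>T. \<forall>x0 y. distr r x0 p < \<delta> \<longrightarrow> is_solution r \<alpha> m x0 y \<longrightarrow>
        (\<forall>t\<ge>T. distr r (y t) p < \<epsilon>))"

definition V0 :: "nat \<Rightarrow> (nat \<Rightarrow> real) \<Rightarrow> nat \<Rightarrow> real" where
  "V0 r \<alpha> i = (\<Prod>j\<in>{Suc i..<r}. \<alpha> j)"

end

(* Writing e = x - z V0 for the deviation from the equilibrium, the system becomes the cyclic
   chain e_j' = e_(j-1) - alpha_j e_j, closed by the increment f (z + e_r) - f z of the Hill term,
   which near the equilibrium is D e_r with D = f'(z).  As f z = phi z, the derivative of h is
   h'(z) = (D - phi) / z, so the sign conditions of the theorem say D < phi in the stable cases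
   and D > phi in the unstable ones.

   If D < phi, choose c > 0 so small that phi still dominates D after replacing each alpha_j by
   alpha_j - 2c, and weights v_j = prod_(i > j) (alpha_i - 2c).  On every face of the box
   |e_j| <= K v_j exp (- c t) the vector field points inwards, so a solution can never reach the
   boundary: it decays exponentially, uniformly for starting points in a small ball.  If D > phi,
   the weights prod_(i > j) (alpha_i + 2c) make the cone e_j >= s v_j exp (c t) invariant, so the
   solution from a point close to the equilibrium inside the cone grows exponentially until it
   leaves a fixed neighbourhood.  Both invariance statements follow from a first-exit-time
   argument.  The unstable case needs solutions to exist, which follows from Picard iteration,
   the vector field being globally Lipschitz. *)

theory Submission
  imports Defs
begin

section \<open>The Hill function\<close>

lemma hillf_minus: "hillf m (- x) = - hillf m x"
  by (simp add: hillf_def sgn_minus)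

lemma hillf_nonneg: "0 \<le> x \<Longrightarrow> hillf m x = x powr m / (1 + x powr m)"
  by (cases "x = 0") (auto simp: hillf_def)

lemma powr_diff_le:
  fixes a b m :: real
  assumes "0 \<le> a" "a \<le> b" "1 \<le> m"
  shows "b powr m - a powr m \<le> m * b powr (m - 1) * (b - a)"
proof (cases "a = 0")
  case True
  have "b powr m = b powr (m - 1) * b"
    using assms powr_add[of b "m - 1" 1] by (cases "b = 0") auto
  then show ?thesis
    using True assms mult_right_mono[of 1 m "b powr (m - 1) * b"] by (simp add: mult.assoc)
next
  case False
  then have "a < b \<or> a = b" "0 < a" using assms by auto
  moreover have ?thesis if "a < b" "0 < a"
  proof -
    have "\<exists>c>a. c < b \<and> b powr m - a powr m = (b - a) * (m * c powr (m - 1))"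
      by (rule MVT2[OF \<open>a < b\<close>]) (use that in \<open>auto intro: has_real_derivative_powr\<close>)
    then obtain c where c: "a < c" "c < b" "b powr m - a powr m = (b - a) * (m * c powr (m - 1))"
      by blast
    have "c powr (m - 1) \<le> b powr (m - 1)"
      using c that assms by (intro powr_mono2) auto
    then have "(b - a) * (m * c powr (m - 1)) \<le> (b - a) * (m * b powr (m - 1))"
      using c assms by (intro mult_left_mono) auto
    then show ?thesis
      using c by (simp add: algebra_simps)
  qed
  ultimately show ?thesis by auto
qed

lemma hillf_increment_bounds_nonneg:
  assumes "0 \<le> a" "a \<le> b" "1 \<le> m"
  shows "0 \<le> hillf m b - hillf m a \<and> hillf m b - hillf m a \<le> m * (b - a)"
proof -
  define A B where "A = a powr m" and "B = b powr m"
  have AB: "0 \<le> A" "A \<le> B"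
    using assms by (auto simp: A_def B_def intro: powr_mono2)
  have diff: "hillf m b - hillf m a = (B - A) / ((1 + A) * (1 + B))"
    using assms AB by (simp add: hillf_nonneg A_def[symmetric] B_def[symmetric] field_simps)
  have "b powr (m - 1) \<le> 1 + B"
  proof (cases "b \<le> 1")
    case True
    then show ?thesis using assms AB powr_le1[of "m - 1" b] by simp
  next
    case False
    then have "b powr (m - 1) \<le> b powr m" using assms by (intro powr_mono) auto
    then show ?thesis by (simp add: B_def)
  qed
  then have "B - A \<le> m * (b - a) * (1 + B)"
    using powr_diff_le[OF assms] assms
    by (simp add: A_def B_def) (smt (verit) mult_left_mono mult.commute mult.left_commute)
  then have "(B - A) / (1 + B) \<le> m * (b - a)"
    using AB by (simp add: divide_le_eq)
  moreover have "(B - A) / ((1 + A) * (1 + B)) \<le> (B - A) / (1 + B)"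
    using AB by (intro divide_left_mono) auto
  ultimately show ?thesis
    using diff AB by simp
qed

lemma odd_increment_bounds:
  fixes f :: "real \<Rightarrow> real"
  assumes odd: "\<And>x. f (- x) = - f x"
    and half: "\<And>a b. 0 \<le> a \<Longrightarrow> a \<le> b \<Longrightarrow> 0 \<le> f b - f a \<and> f b - f a \<le> L * (b - a)"
    and "x \<le> y"
  shows "0 \<le> f y - f x \<and> f y - f x \<le> L * (y - x)"
proof -
  have "f 0 = 0" using odd[of 0] by simp
  consider "0 \<le> x" | "y \<le> 0" | "x < 0" "0 < y" by linarith
  then show ?thesis
  proof cases
    case 1
    then show ?thesis using half \<open>x \<le> y\<close> by blast
  next
    case 2
    then show ?thesis using half[of "- y" "- x"] \<open>x \<le> y\<close> by (simp add: odd algebra_simps)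
  next
    case 3
    then show ?thesis
      using half[of 0 y] half[of 0 "- x"] \<open>f 0 = 0\<close> by (simp add: odd algebra_simps)
  qed
qed

lemma hillf_increment_bounds:
  assumes "1 \<le> m" "x \<le> y"
  shows "0 \<le> hillf m y - hillf m x \<and> hillf m y - hillf m x \<le> m * (y - x)"
  using odd_increment_bounds[OF hillf_minus hillf_increment_bounds_nonneg] assms by blast

lemma hillf_mono: "1 \<le> m \<Longrightarrow> x \<le> y \<Longrightarrow> hillf m x \<le> hillf m y"
  using hillf_increment_bounds by fastforce

lemma hillf_lipschitz: "1 \<le> m \<Longrightarrow> \<bar>hillf m x - hillf m y\<bar> \<le> m * \<bar>x - y\<bar>"
  using hillf_increment_bounds[of m x y] hillf_increment_bounds[of m y x]
  by (cases "x \<le> y") auto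

lemma hillf_differentiable_pos:
  assumes "0 < z" shows "\<exists>D. (hillf m has_real_derivative D) (at z)"
proof -
  have d: "((\<lambda>x. x powr m / (1 + x powr m)) has_real_derivative
      ((m * z powr (m - 1)) * (1 + z powr m) - z powr m * (m * z powr (m - 1))) / (1 + z powr m)^2) (at z)"
    using assms
    by (auto intro!: derivative_eq_intros has_real_derivative_powr simp: power2_eq_square add_nonneg_eq_0_iff)
  show ?thesis
    by (rule exI, rule has_field_derivative_transform_within_open[OF d, where S = "{0<..}"])
       (use assms in \<open>auto simp: hillf_nonneg\<close>)
qed

lemma hillf_differentiable:
  assumes "z \<noteq> 0" shows "\<exists>D. (hillf m has_real_derivative D) (at z)"
proof (cases "0 < z")
  case False
  then obtain D where "(hillf m has_real_derivative D) (at (- z))"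
    using assms hillf_differentiable_pos[of "- z"] by auto
  then have "((\<lambda>x. - hillf m (- x)) has_real_derivative D) (at z)"
    by (auto intro!: derivative_eq_intros DERIV_chain2[where f = "hillf m"])
  then show ?thesis by (auto simp: hillf_minus)
qed (rule hillf_differentiable_pos)

lemma hillf_deriv_nonneg:
  assumes "1 \<le> m" "(hillf m has_real_derivative D) (at z)" shows "0 \<le> D"
proof -
  have "((\<lambda>y. (hillf m y - hillf m z) / (y - z)) \<longlongrightarrow> D) (at z)"
    using assms(2) by (simp add: has_field_derivative_iff)
  moreover have "0 \<le> (hillf m y - hillf m z) / (y - z)" for y
    by (cases "z \<le> y") (auto simp: zero_le_divide_iff hillf_mono[OF assms(1)])
  then have "\<forall>\<^sub>F y in at z. 0 \<le> (hillf m y - hillf m z) / (y - z)"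
    by simp
  ultimately show ?thesis
    by (rule tendsto_lowerbound) simp
qed

lemma hfun_deriv:
  assumes "z \<noteq> 0" "(hillf m has_real_derivative D) (at z)"
  shows "deriv (hfun m) z = (D * z - hillf m z) / (z * z)"
proof -
  have "hfun m = (\<lambda>w. hillf m w / w)" by (simp add: hfun_def fun_eq_iff)
  then show ?thesis
    using DERIV_divide[OF assms(2) DERIV_ident assms(1)] by (simp add: DERIV_imp_deriv)
qed

section \<open>Existence of solutions\<close>

lemma has_integral_power_Icc_0:
  fixes t :: real
  assumes "0 \<le> t"
  shows "((\<lambda>s. s ^ k) has_integral t ^ Suc k / Suc k) {0..t}"
proof -
  have "((\<lambda>s. s ^ Suc k / Suc k) has_real_derivative real (Suc k) * x ^ k / Suc k) (at x)" for x :: real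
    using DERIV_cdivide[OF DERIV_pow[of "Suc k" x], of "Suc k"] by simp
  then have "((\<lambda>s. s ^ Suc k / Suc k) has_real_derivative x ^ k) (at x within {0..t})" for x :: real
    by (simp add: has_field_derivative_at_within del: of_nat_Suc)
  then show ?thesis
    using fundamental_theorem_of_calculus[OF assms, of "\<lambda>s. s ^ Suc k / Suc k"]
    by (simp add: has_real_derivative_iff_has_vector_derivative)
qed

locale lipschitz_field =
  fixes r :: nat and F :: "(nat \<Rightarrow> real) \<Rightarrow> nat \<Rightarrow> real" and L :: real
  assumes L_nonneg: "0 \<le> L"
    and lipschitz: "\<And>x y i. i < r \<Longrightarrow> \<bar>F x i - F y i\<bar> \<le> L * (\<Sum>j<r. \<bar>x j - y j\<bar>)"
begin

lemma continuous_on_field: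
  assumes "\<And>j. j < r \<Longrightarrow> continuous_on T (\<lambda>t. y t j)" "i < r"
  shows "continuous_on T (\<lambda>t. F (y t) i)"
  unfolding continuous_on_def
proof
  fix t0 assume "t0 \<in> T"
  then have "((\<lambda>t. L * (\<Sum>j<r. \<bar>y t j - y t0 j\<bar>)) \<longlongrightarrow> L * (\<Sum>j<r. \<bar>y t0 j - y t0 j\<bar>)) (at t0 within T)"
    using assms(1) by (intro tendsto_intros) (auto simp: continuous_on_def)
  then have "((\<lambda>t. L * (\<Sum>j<r. \<bar>y t j - y t0 j\<bar>)) \<longlongrightarrow> 0) (at t0 within T)"
    by simp
  then have "((\<lambda>t. F (y t) i - F (y t0) i) \<longlongrightarrow> 0) (at t0 within T)"
    by (rule Lim_null_comparison[OF always_eventually[OF allI], rotated])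
       (simp add: lipschitz[OF assms(2)])
  then show "((\<lambda>t. F (y t) i) \<longlongrightarrow> F (y t0) i) (at t0 within T)"
    by (simp add: LIM_zero_iff)
qed

lemma uniform_limit_field:
  assumes "\<And>j. j < r \<Longrightarrow> uniform_limit T (\<lambda>n t. y n t j) (\<lambda>t. Y t j) sequentially" "i < r"
  shows "uniform_limit T (\<lambda>n t. F (y n t) i) (\<lambda>t. F (Y t) i) sequentially"
proof (rule uniform_limitI)
  fix e :: real assume "0 < e"
  define e' where "e' = e / (L * r + 1)"
  have "0 < L * r + 1"
    using L_nonneg by (simp add: add_nonneg_pos)
  then have "0 < e'" and Le': "L * (real r * e') < e"
    using \<open>0 < e\<close> by (simp_all add: e'_def field_simps)
  have "\<forall>\<^sub>F n in sequentially. \<forall>j\<in>{..<r}. \<forall>t\<in>T. dist (y n t j) (Y t j) < e'"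
    using assms(1) \<open>0 < e'\<close> by (intro eventually_ball_finite) (auto dest: uniform_limitD)
  then show "\<forall>\<^sub>F n in sequentially. \<forall>t\<in>T. dist (F (y n t) i) (F (Y t) i) < e"
  proof eventually_elim
    case (elim n)
    show ?case
    proof
      fix t assume "t \<in> T"
      have "(\<Sum>j<r. \<bar>y n t j - Y t j\<bar>) \<le> real (card {..<r}) * e'"
        by (rule sum_bounded_above) (use elim \<open>t \<in> T\<close> in \<open>auto simp: dist_real_def intro: less_imp_le\<close>)
      then have "(\<Sum>j<r. \<bar>y n t j - Y t j\<bar>) \<le> real r * e'"
        by simp
      then have "\<bar>F (y n t) i - F (Y t) i\<bar> \<le> L * (real r * e')"
        using lipschitz[OF assms(2)] L_nonneg by (meson mult_left_mono order_trans)
      then show "dist (F (y n t) i) (F (Y t) i) < e"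
        using Le' by (simp add: dist_real_def)
    qed
  qed
qed

context
  fixes x0 :: "nat \<Rightarrow> real"
begin

primrec picard :: "nat \<Rightarrow> real \<Rightarrow> nat \<Rightarrow> real" where
  "picard 0 t = x0"
| "picard (Suc n) t = (\<lambda>i. x0 i + integral {0..t} (\<lambda>s. F (picard n s) i))"

declare picard.simps(2)[simp del]

lemma picard_continuous: "i < r \<Longrightarrow> continuous_on {0..T} (\<lambda>t. picard n t i)"
proof (induction n arbitrary: i)
  case (Suc n)
  then have "continuous_on {0..T} (\<lambda>s. F (picard n s) i)"
    by (intro continuous_on_field) auto
  then show ?case
    by (auto simp: picard.simps intro!: continuous_intros indefinite_integral_continuous_1 integrable_continuous_real)
qed simp

lemma picard_integrable: "i < r \<Longrightarrow> (\<lambda>s. F (picard n s) i) integrable_on {0..t}"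
  by (intro integrable_continuous_real continuous_on_field picard_continuous)

lemma picard_increment_le:
  assumes "0 \<le> t" "i < r"
  shows "\<bar>picard (Suc n) t i - picard n t i\<bar>
    \<le> (\<Sum>j<r. \<bar>F x0 j\<bar>) * (real r * L) ^ n * t ^ Suc n / fact (Suc n)"
  using assms
proof (induction n arbitrary: t i)
  case 0
  have "\<bar>F x0 i\<bar> \<le> (\<Sum>j<r. \<bar>F x0 j\<bar>)"
    using 0 by (intro member_le_sum) auto
  then show ?case
    using 0 by (simp add: picard.simps abs_mult mult.commute mult_left_mono)
next
  case (Suc n)
  define B where "B = (\<Sum>j<r. \<bar>F x0 j\<bar>) * (real r * L) ^ n / fact (Suc n)"
  define K where "K = L * real r * B"
  have bound: "norm (F (picard (Suc n) s) i - F (picard n s) i) \<le> K * s ^ Suc n"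
    if "s \<in> {0..t}" for s
  proof -
    have "(\<Sum>j<r. \<bar>picard (Suc n) s j - picard n s j\<bar>) \<le> real (card {..<r}) * (B * s ^ Suc n)"
      by (rule sum_bounded_above) (use Suc.IH that in \<open>auto simp: B_def\<close>)
    then have "L * (\<Sum>j<r. \<bar>picard (Suc n) s j - picard n s j\<bar>) \<le> L * (real r * (B * s ^ Suc n))"
      using L_nonneg by (intro mult_left_mono) auto
    then show ?thesis
      using lipschitz[OF Suc.prems(2), of "picard (Suc n) s" "picard n s"] by (simp add: K_def)
  qed
  have power: "((\<lambda>s. K * s ^ Suc n) has_integral K * (t ^ Suc (Suc n) / Suc (Suc n))) {0..t}"
    by (intro has_integral_mult_right has_integral_power_Icc_0 Suc.prems)
  have "norm (integral {0..t} (\<lambda>s. F (picard (Suc n) s) i - F (picard n s) i))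
      \<le> integral {0..t} (\<lambda>s. K * s ^ Suc n)"
    using Suc.prems(2) bound
    by (intro integral_norm_bound_integral integrable_diff picard_integrable has_integral_integrable[OF power])
  also have "\<dots> = K * (t ^ Suc (Suc n) / Suc (Suc n))"
    using power by (rule integral_unique)
  finally have "norm (integral {0..t} (\<lambda>s. F (picard (Suc n) s) i - F (picard n s) i))
      \<le> K * (t ^ Suc (Suc n) / Suc (Suc n))" .
  moreover have "picard (Suc (Suc n)) t i - picard (Suc n) t i
      = integral {0..t} (\<lambda>s. F (picard (Suc n) s) i - F (picard n s) i)"
    unfolding picard.simps(2)[of "Suc n" t] picard.simps(2)[of n t] using Suc.prems(2)
    by (simp add: integral_diff[OF picard_integrable picard_integrable])
  moreover have "K * (t ^ Suc (Suc n) / Suc (Suc n))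
      = (\<Sum>j<r. \<bar>F x0 j\<bar>) * (real r * L) ^ Suc n * t ^ Suc (Suc n) / fact (Suc (Suc n))"
    by (simp add: K_def B_def algebra_simps)
  ultimately show ?case by simp
qed

lemma picard_increment_le_exp_term:
  assumes "t \<in> {0..T}" "i < r"
  shows "\<bar>picard (Suc n) t i - picard n t i\<bar>
    \<le> (\<Sum>j<r. \<bar>F x0 j\<bar>) * T * (inverse (fact n) * (real r * L * T) ^ n)"
proof -
  define B C where "B = (\<Sum>j<r. \<bar>F x0 j\<bar>)" and "C = real r * L"
  have "0 \<le> B" "0 \<le> C" using L_nonneg by (auto simp: B_def C_def intro: sum_nonneg)
  have "B * C ^ n * t ^ Suc n / fact (Suc n) \<le> B * C ^ n * T ^ Suc n / fact (Suc n)"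
    using assms(1) \<open>0 \<le> B\<close> \<open>0 \<le> C\<close> by (intro divide_right_mono mult_left_mono power_mono) auto
  also have "\<dots> \<le> B * C ^ n * T ^ Suc n / fact n"
    using assms(1) \<open>0 \<le> B\<close> \<open>0 \<le> C\<close> by (intro divide_left_mono fact_mono) auto
  also have "\<dots> = B * T * (inverse (fact n) * (C * T) ^ n)"
    by (simp add: power_mult_distrib field_simps)
  finally show ?thesis
    using picard_increment_le[of t i n] assms by (simp add: B_def C_def)
qed

definition picard_limit :: "real \<Rightarrow> nat \<Rightarrow> real" where
  "picard_limit t i = x0 i + (\<Sum>k. picard (Suc k) t i - picard k t i)"

lemma picard_uniform_limit:
  assumes "i < r"
  shows "uniform_limit {0..T} (\<lambda>n t. picard n t i) (\<lambda>t. picard_limit t i) sequentially"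
proof -
  have "uniform_limit {0..T} (\<lambda>n t. \<Sum>k<n. picard (Suc k) t i - picard k t i)
      (\<lambda>t. \<Sum>k. picard (Suc k) t i - picard k t i) sequentially"
    by (rule Weierstrass_m_test[OF _ summable_mult[OF summable_exp]])
       (use picard_increment_le_exp_term assms in auto)
  then have "uniform_limit {0..T} (\<lambda>n t. x0 i + (\<Sum>k<n. picard (Suc k) t i - picard k t i))
      (\<lambda>t. picard_limit t i) sequentially"
    unfolding picard_limit_def by (intro uniform_limit_add uniform_limit_const)
  moreover have "x0 i + (\<Sum>k<n. picard (Suc k) t i - picard k t i) = picard n t i" for n t
    using sum_lessThan_telescope[of "\<lambda>k. picard k t i" n] by simp
  ultimately show ?thesis by simp
qed

lemma picard_limit_continuous:
  assumes "i < r" shows "continuous_on {0..T} (\<lambda>t. picard_limit t i)"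
  using uniform_limit_theorem[OF always_eventually picard_uniform_limit[OF assms]]
    picard_continuous[OF assms] by simp

lemma picard_limit_integral_eq:
  assumes "0 \<le> t" "i < r"
  shows "picard_limit t i = x0 i + integral {0..t} (\<lambda>s. F (picard_limit s) i)"
proof -
  have lim: "uniform_limit {0..t} (\<lambda>n s. F (picard n s) i) (\<lambda>s. F (picard_limit s) i) sequentially"
    using assms(2) by (intro uniform_limit_field picard_uniform_limit)
  have cont: "continuous_on {0..t} (\<lambda>s. F (picard n s) i)" for n
    using assms(2) by (intro continuous_on_field picard_continuous)
  obtain I J where I: "\<And>n. ((\<lambda>s. F (picard n s) i) has_integral I n) {0..t}"
    and J: "((\<lambda>s. F (picard_limit s) i) has_integral J) {0..t}" and "I \<longlonglongrightarrow> J"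
    by (rule uniform_limit_integral[OF lim cont]) auto
  then have "(\<lambda>n. picard (Suc n) t i) \<longlonglongrightarrow> x0 i + J"
    by (simp add: picard.simps(2) integral_unique[OF I] tendsto_add)
  moreover have "(\<lambda>n. picard n t i) \<longlonglongrightarrow> picard_limit t i"
    using tendsto_uniform_limitI[OF picard_uniform_limit[OF assms(2), of t], of t] assms(1) by simp
  then have "(\<lambda>n. picard (Suc n) t i) \<longlonglongrightarrow> picard_limit t i"
    by (rule LIMSEQ_Suc)
  ultimately show ?thesis
    using LIMSEQ_unique integral_unique[OF J] by metis
qed

lemma picard_limit_has_derivative:
  assumes "0 \<le> t" "i < r"
  shows "((\<lambda>s. picard_limit s i) has_real_derivative F (picard_limit t) i) (at t within {0..})"
proof -
  have "((\<lambda>u. integral {0..u} (\<lambda>s. F (picard_limit s) i)) has_real_derivative F (picard_limit t) i)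
      (at t within {0..t + 1})"
    using assms by (intro integral_has_real_derivative continuous_on_field picard_limit_continuous) auto
  then have "((\<lambda>u. x0 i + integral {0..u} (\<lambda>s. F (picard_limit s) i)) has_real_derivative
      F (picard_limit t) i) (at t within {0..t + 1})"
    using DERIV_add[OF DERIV_const] by fastforce
  then have "((\<lambda>s. picard_limit s i) has_real_derivative F (picard_limit t) i) (at t within {0..t + 1})"
    by (rule has_field_derivative_transform_within[OF _ zero_less_one])
       (use assms picard_limit_integral_eq in auto)
  moreover have "at t within {0..} = at t within {0..t + 1}"
    by (rule at_within_nhd[of t "{..<t + 1}"]) auto
  ultimately show ?thesis by simp
qed

lemma solution_exists:
  "\<exists>y. (\<forall>i<r. y 0 i = x0 i) \<and>
     (\<forall>t\<ge>0. \<forall>i<r. ((\<lambda>s. y s i) has_real_derivative F (y t) i) (at t within {0..}))"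
  using picard_limit_integral_eq[of 0] picard_limit_has_derivative by auto

end

end

lemma vfield_lipschitz:
  assumes "1 \<le> r" "1 \<le> m" "i < r"
  shows "\<bar>vfield r \<alpha> m x i - vfield r \<alpha> m y i\<bar>
    \<le> (m + (\<Sum>j<r. \<bar>\<alpha> j\<bar>) + 1) * (\<Sum>j<r. \<bar>x j - y j\<bar>)"
proof -
  define S A where "S = (\<Sum>j<r. \<bar>x j - y j\<bar>)" and "A = (\<Sum>j<r. \<bar>\<alpha> j\<bar>)"
  have coord: "\<bar>x j - y j\<bar> \<le> S" if "j < r" for j
    unfolding S_def using that by (intro member_le_sum) auto
  have "\<bar>\<alpha> i\<bar> \<le> A"
    unfolding A_def using assms(3) by (intro member_le_sum) auto
  then have damping: "\<bar>\<alpha> i * (x i - y i)\<bar> \<le> A * S"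
    using coord[OF assms(3)] by (simp add: abs_mult mult_mono)
  have "0 \<le> S" unfolding S_def by (intro sum_nonneg) auto
  then have "0 \<le> m * S" using assms(2) by simp
  show ?thesis
  proof (cases "i = 0")
    case True
    have "\<bar>hillf m (x (r - 1)) - hillf m (y (r - 1))\<bar> \<le> m * S"
      using hillf_lipschitz[OF assms(2)] coord[of "r - 1"] assms
      by (meson diff_less less_numeral_extra(1) mult_left_mono order.trans less_le_trans zero_le_one)
    then show ?thesis
      using True damping \<open>0 \<le> S\<close>
      by (simp add: vfield_def S_def[symmetric] A_def[symmetric] algebra_simps abs_le_iff)
  next
    case False
    have "\<bar>x (i - 1) - y (i - 1)\<bar> \<le> S"
      using assms(3) by (intro coord) auto
    then show ?thesis
      using False damping \<open>0 \<le> m * S\<close>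
      by (simp add: vfield_def S_def[symmetric] A_def[symmetric] algebra_simps abs_le_iff)
  qed
qed

lemma is_solution_exists:
  assumes "1 \<le> r" "1 \<le> m" shows "\<exists>y. is_solution r \<alpha> m x0 y"
proof -
  interpret lipschitz_field r "vfield r \<alpha> m" "m + (\<Sum>j<r. \<bar>\<alpha> j\<bar>) + 1"
    using assms by unfold_locales (auto intro: vfield_lipschitz sum_nonneg)
  show ?thesis
    using solution_exists[of x0] by (auto simp: is_solution_def)
qed

lemma distr_coord_le: "j < r \<Longrightarrow> \<bar>x j - y j\<bar> \<le> distr r x y"
proof -
  assume "j < r"
  then have "(x j - y j)\<^sup>2 \<le> (\<Sum>i<r. (x i - y i)\<^sup>2)"
    by (intro member_le_sum) auto
  then show ?thesis
    unfolding distr_def by (metis real_sqrt_abs real_sqrt_le_mono)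
qed

lemma distr_le_sum_abs: "distr r x y \<le> (\<Sum>i<r. \<bar>x i - y i\<bar>)"
  using L2_set_le_sum_abs[of "\<lambda>i. x i - y i" "{..<r}"] by (simp add: distr_def L2_set_def)

lemma V0_last: "1 \<le> r \<Longrightarrow> V0 r \<alpha> (r - 1) = 1"
  by (simp add: V0_def)

lemma V0_step: "1 \<le> i \<Longrightarrow> i < r \<Longrightarrow> V0 r \<alpha> (i - 1) = \<alpha> i * V0 r \<alpha> i"
  by (simp add: V0_def prod.atLeast_Suc_lessThan)

lemma V0_0: "1 \<le> r \<Longrightarrow> \<alpha> 0 * V0 r \<alpha> 0 = (\<Prod>i<r. \<alpha> i)"
  by (simp add: V0_def prod.atLeast_Suc_lessThan[symmetric] atLeast0LessThan)

lemma V0_pos: "\<forall>j<r. 0 < \<alpha> j \<Longrightarrow> 0 < V0 r \<alpha> i"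
  unfolding V0_def by (intro prod_pos) auto

lemma linearization_bound:
  assumes "(f has_real_derivative D) (at z)" "0 < \<eta>"
  obtains \<rho> where "0 < \<rho>" "\<And>w. \<bar>w - z\<bar> < \<rho> \<Longrightarrow> \<bar>f w - f z - D * (w - z)\<bar> \<le> \<eta> * \<bar>w - z\<bar>"
  using assms unfolding has_field_derivative_def has_derivative_at_alt by force

lemma exists_shift_prod_less:
  fixes \<alpha> :: "nat \<Rightarrow> real"
  assumes "(\<Prod>j<r. \<alpha> j) < L"
  shows "\<exists>c>0. (\<Prod>j<r. \<alpha> j + c) < L"
proof -
  have "((\<lambda>c. \<Prod>j<r. \<alpha> j + c) \<longlongrightarrow> (\<Prod>j<r. \<alpha> j + 0)) (at_right 0)"
    by (intro tendsto_intros)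
  then have "\<forall>\<^sub>F c in at_right 0. (\<Prod>j<r. \<alpha> j + c) < L"
    using assms by (intro order_tendstoD(2)) auto
  moreover have "\<forall>\<^sub>F c in at_right (0::real). 0 < c"
    by (simp add: eventually_at_right_less)
  ultimately have "\<forall>\<^sub>F c in at_right 0. 0 < c \<and> (\<Prod>j<r. \<alpha> j + c) < L"
    by eventually_elim auto
  then show ?thesis
    using eventually_happens trivial_limit_at_right_real by blast
qed

lemma exists_shift_prod_greater:
  fixes \<alpha> :: "nat \<Rightarrow> real"
  assumes "\<forall>j<r. 0 < \<alpha> j" "L < (\<Prod>j<r. \<alpha> j)"
  shows "\<exists>c>0. (\<forall>j<r. c < \<alpha> j) \<and> L < (\<Prod>j<r. \<alpha> j - c)"
proof -
  have "((\<lambda>c. \<Prod>j<r. \<alpha> j - c) \<longlongrightarrow> (\<Prod>j<r. \<alpha> j - 0)) (at_right 0)"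
    by (intro tendsto_intros)
  then have "\<forall>\<^sub>F c in at_right 0. L < (\<Prod>j<r. \<alpha> j - c)"
    using assms(2) by (intro order_tendstoD(1)) auto
  moreover have "\<forall>\<^sub>F c in at_right 0. \<forall>j\<in>{..<r}. c \<in> {0<..<\<alpha> j}"
    using assms(1) by (intro eventually_ball_finite ballI eventually_at_right_real) auto
  moreover have "\<forall>\<^sub>F c in at_right (0::real). 0 < c"
    by (simp add: eventually_at_right_less)
  ultimately have "\<forall>\<^sub>F c in at_right 0. 0 < c \<and> (\<forall>j<r. c < \<alpha> j) \<and> L < (\<Prod>j<r. \<alpha> j - c)"
    by eventually_elim (use assms(1) in auto)
  then show ?thesis
    using eventually_happens trivial_limit_at_right_real by blast
qed

lemma exp_decay_eventually_less:
  fixes A c \<epsilon> :: real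
  assumes "0 < c" "0 < \<epsilon>" "0 \<le> A"
  shows "\<exists>T\<ge>0. \<forall>t\<ge>T. A * exp (- c * t) < \<epsilon>"
proof (intro exI conjI allI impI)
  show "0 \<le> A / (c * \<epsilon>)" using assms by simp
  fix t assume "A / (c * \<epsilon>) \<le> t"
  then have "A \<le> \<epsilon> * (c * t)"
    using assms by (simp add: field_simps)
  also have "\<dots> < \<epsilon> * exp (c * t)"
    using exp_ge_add_one_self[of "c * t"] \<open>0 < \<epsilon>\<close> by (intro mult_strict_left_mono) linarith+
  finally show "A * exp (- c * t) < \<epsilon>"
    by (simp add: exp_minus field_simps)
qed

lemma sign_mult_le_abs: "\<sigma> \<in> {-1, 1} \<Longrightarrow> \<sigma> * a \<le> \<bar>a\<bar>"
  for \<sigma> a :: real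
  by auto

lemma barrier_stays_positive:
  fixes g :: "'i \<Rightarrow> real \<Rightarrow> real"
  assumes fin: "finite I"
    and cont: "\<And>i. i \<in> I \<Longrightarrow> continuous_on {0..} (g i)"
    and init: "\<And>i. i \<in> I \<Longrightarrow> 0 < g i 0"
    and exit_deriv: "\<And>t i. 0 < t \<Longrightarrow> i \<in> I \<Longrightarrow> \<forall>j\<in>I. 0 \<le> g j t \<Longrightarrow> g i t = 0 \<Longrightarrow>
      \<exists>D>0. (g i has_real_derivative D) (at t within {0..})"
  shows "\<forall>t\<ge>0. \<forall>i\<in>I. 0 < g i t"
proof (rule ccontr)
  assume violated: "\<not> ?thesis"
  define S where "S = {t. 0 \<le> t \<and> (\<exists>i\<in>I. g i t \<le> 0)}"
  have "S \<noteq> {}" using violated by (auto simp: S_def not_less)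
  have S_eq: "S = (\<Union>i\<in>I. {0..} \<inter> g i -` {..0})" by (auto simp: S_def)
  have "closed S"
    unfolding S_eq
    by (rule closed_UN[OF fin]) (use cont in \<open>auto intro!: continuous_closed_preimage\<close>)
  have "bdd_below S" by (auto simp: S_def bdd_below_def)
  define s where "s = Inf S"
  have "s \<in> S"
    using closed_contains_Inf[OF \<open>S \<noteq> {}\<close> \<open>bdd_below S\<close> \<open>closed S\<close>] by (simp add: s_def)
  then obtain i where i: "i \<in> I" "g i s \<le> 0" "0 \<le> s" by (auto simp: S_def)
  have before: "0 < g j t" if "j \<in> I" "0 \<le> t" "t < s" for j t
  proof (rule ccontr)
    assume "\<not> 0 < g j t"
    then have "t \<in> S" using that by (auto simp: S_def not_less)
    then have "s \<le> t" unfolding s_def using \<open>bdd_below S\<close> by (rule cInf_lower)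
    with that show False by simp
  qed
  have "0 < s" using init[OF i(1)] i by (cases "s = 0") auto
  have at_s: "0 \<le> g j s" if "j \<in> I" for j
  proof -
    have "isCont (g j) s"
      using cont[OF that] \<open>0 < s\<close> by (intro continuous_on_interior[of "{0..}"]) auto
    then have "(g j \<longlongrightarrow> g j s) (at_left s)"
      unfolding isCont_def by (rule tendsto_within_subset) auto
    moreover have "\<forall>\<^sub>F t in at_left s. 0 < g j t"
      using \<open>0 < s\<close> before[OF that] by (auto simp: eventually_at_left intro!: exI[of _ 0])
    ultimately show ?thesis
      by (rule tendsto_lowerbound[OF _ eventually_mono]) (auto simp: trivial_limit_at_left_real)
  qed
  then have "g i s = 0" using i by (simp add: order_antisym)
  then obtain D where "0 < D" "(g i has_real_derivative D) (at s within {0..})"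
    using exit_deriv[OF \<open>0 < s\<close> i(1)] at_s by blast
  moreover have "at s within {0..} = at s"
    using \<open>0 < s\<close> by (intro at_within_interior) auto
  ultimately obtain d where "0 < d" "\<forall>h>0. h < d \<longrightarrow> g i (s - h) < g i s"
    using DERIV_pos_inc_left by force
  then have "g i (s - min d s / 2) < 0"
    using \<open>g i s = 0\<close> \<open>0 < s\<close> by simp
  moreover have "0 < g i (s - min d s / 2)"
    using before[OF i(1)] \<open>0 < d\<close> \<open>0 < s\<close> by simp
  ultimately show False by simp
qed

section \<open>Stability of the equilibria\<close>

locale hill_equilibrium =
  fixes r :: nat and \<alpha> :: "nat \<Rightarrow> real" and m z :: real
  assumes r_ge_2: "2 \<le> r" and \<alpha>_pos: "\<forall>i<r. 0 < \<alpha> i" and m_ge_1: "1 \<le> m"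
    and equilibrium: "hillf m z = (\<Prod>i<r. \<alpha> i) * z"
begin

abbreviation eq_point :: "nat \<Rightarrow> real" where
  "eq_point \<equiv> \<lambda>i. z * V0 r \<alpha> i"

lemma eq_point_last: "eq_point (r - 1) = z"
  using V0_last[of r \<alpha>] r_ge_2 by simp

lemma lessThan_r_nonempty: "{..<r} \<noteq> {}"
  using r_ge_2 by (simp add: lessThan_empty_iff)

lemma vfield_succ_eq:
  assumes "1 \<le> i" "i < r"
  shows "vfield r \<alpha> m x i = (x (i - 1) - eq_point (i - 1)) - \<alpha> i * (x i - eq_point i)"
  using V0_step[OF assms, of \<alpha>] assms by (simp add: vfield_def algebra_simps)

lemma vfield_0_eq:
  "vfield r \<alpha> m x 0 = (hillf m (x (r - 1)) - hillf m z) - \<alpha> 0 * (x 0 - eq_point 0)"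
  using V0_0[of r \<alpha>] r_ge_2 equilibrium by (simp add: vfield_def algebra_simps)

end

locale hill_stable_rate = hill_equilibrium +
  fixes D \<eta> \<rho> c :: real
  assumes linearization:
      "\<And>w. \<bar>w - z\<bar> < \<rho> \<Longrightarrow> \<bar>hillf m w - hillf m z - D * (w - z)\<bar> \<le> \<eta> * \<bar>w - z\<bar>"
    and \<rho>_pos: "0 < \<rho>" and D_nonneg: "0 \<le> D" and \<eta>_nonneg: "0 \<le> \<eta>" and c_pos: "0 < c"
    and c_small: "\<forall>j<r. 2 * c < \<alpha> j"
    and gain_gap: "D + \<eta> < (\<alpha> 0 - c) * V0 r (\<lambda>j. \<alpha> j - 2 * c) 0"
begin

abbreviation v :: "nat \<Rightarrow> real" where
  "v \<equiv> V0 r (\<lambda>j. \<alpha> j - 2 * c)"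

lemma v_pos: "0 < v i"
  using c_small by (intro V0_pos) auto

lemma inward_on_box_faces:
  assumes "0 < s" "s < \<rho>"
    and box: "\<forall>j<r. \<bar>x j - eq_point j\<bar> \<le> s * v j"
    and face: "\<sigma> \<in> {-1, 1}" "i < r" "\<sigma> * (x i - eq_point i) = s * v i"
  shows "\<sigma> * vfield r \<alpha> m x i < - c * s * v i"
proof (cases "i = 0")
  case True
  define e where "e = x (r - 1) - z"
  have "\<bar>e\<bar> \<le> s"
    using box[rule_format, of "r - 1"] r_ge_2 eq_point_last V0_last[of r]
    by (simp add: e_def)
  then have "\<bar>hillf m (x (r - 1)) - hillf m z - D * e\<bar> \<le> \<eta> * \<bar>e\<bar>"
    using linearization[of "x (r - 1)"] \<open>s < \<rho>\<close> by (simp add: e_def)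
  then have "\<bar>hillf m (x (r - 1)) - hillf m z\<bar> \<le> \<bar>D * e\<bar> + \<eta> * \<bar>e\<bar>"
    using abs_triangle_ineq[of "hillf m (x (r - 1)) - hillf m z - D * e" "D * e"] by simp
  also have "\<dots> = (D + \<eta>) * \<bar>e\<bar>"
    using D_nonneg by (simp add: abs_mult distrib_right)
  also have "\<dots> \<le> (D + \<eta>) * s"
    using D_nonneg \<eta>_nonneg \<open>\<bar>e\<bar> \<le> s\<close> by (intro mult_left_mono) auto
  finally have "\<sigma> * (hillf m (x (r - 1)) - hillf m z) \<le> (D + \<eta>) * s"
    using sign_mult_le_abs[OF face(1)] order_trans by blast
  moreover have "(D + \<eta>) * s < (\<alpha> 0 - c) * v 0 * s"
    using gain_gap \<open>0 < s\<close> by simp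
  moreover have "\<sigma> * vfield r \<alpha> m x i
      = \<sigma> * (hillf m (x (r - 1)) - hillf m z) - \<alpha> 0 * (\<sigma> * (x 0 - eq_point 0))"
    using True by (simp add: vfield_0_eq algebra_simps)
  then have "\<sigma> * vfield r \<alpha> m x i
      = \<sigma> * (hillf m (x (r - 1)) - hillf m z) - \<alpha> 0 * (s * v 0)"
    using face(3) True by simp
  ultimately show ?thesis
    using True by (simp add: algebra_simps)
next
  case False
  then have i: "1 \<le> i" "i < r" using face by auto
  have "\<sigma> * vfield r \<alpha> m x i
      = \<sigma> * (x (i - 1) - eq_point (i - 1)) - \<alpha> i * (\<sigma> * (x i - eq_point i))"
    by (simp only: vfield_succ_eq[OF i] algebra_simps)
  also have "\<dots> \<le> s * v (i - 1) - \<alpha> i * (s * v i)"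
    using sign_mult_le_abs[OF face(1)] box i face(3)
    by (smt (verit) less_imp_diff_less)
  also have "\<dots> = - 2 * (c * s * v i)"
    by (subst V0_step[OF i]) (simp add: algebra_simps)
  also have "\<dots> < - c * s * v i"
    using c_pos \<open>0 < s\<close> v_pos by simp
  finally show ?thesis .
qed

lemma solution_in_shrinking_box:
  assumes "0 < K" "K < \<rho>"
    and sol: "is_solution r \<alpha> m x0 y"
    and init: "\<forall>i<r. \<bar>x0 i - eq_point i\<bar> < K * v i"
  shows "\<forall>t\<ge>0. \<forall>i<r. \<bar>y t i - eq_point i\<bar> < K * v i * exp (- c * t)"
proof -
  \<comment> \<open>one barrier for each of the two faces of the box in every coordinate\<close>
  define I where "I = {..<r} \<times> {-1, 1 :: real}"
  define g where "g = (\<lambda>(i, \<sigma>) t. K * v i * exp (- c * t) - \<sigma> * (y t i - eq_point i))"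
  have g_deriv: "(g (i, \<sigma>) has_real_derivative - c * (K * exp (- c * t)) * v i - \<sigma> * vfield r \<alpha> m (y t) i)
      (at t within {0..})" if "i < r" "0 \<le> t" for i \<sigma> t
  proof -
    have "((\<lambda>s. y s i) has_real_derivative vfield r \<alpha> m (y t) i) (at t within {0..})"
      using sol that by (simp add: is_solution_def)
    then show ?thesis
      unfolding g_def by (auto intro!: derivative_eq_intros simp: algebra_simps)
  qed
  have "\<forall>t\<ge>0. \<forall>i\<sigma>\<in>I. 0 < g i\<sigma> t"
  proof (rule barrier_stays_positive)
    show "finite I" by (simp add: I_def)
  next
    fix i\<sigma> assume "i\<sigma> \<in> I"
    then obtain i \<sigma> where i\<sigma>: "i\<sigma> = (i, \<sigma>)" "i < r" "\<sigma> \<in> {-1, 1}" by (auto simp: I_def)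
    show "continuous_on {0..} (g i\<sigma>)"
      unfolding i\<sigma>(1)
      by (rule DERIV_continuous_on[where D = "\<lambda>t. - c * (K * exp (- c * t)) * v i - \<sigma> * vfield r \<alpha> m (y t) i"])
         (use g_deriv i\<sigma>(2) in force)
    have "\<sigma> * (x0 i - eq_point i) < K * v i"
      using sign_mult_le_abs[OF i\<sigma>(3)] init i\<sigma>(2) by (meson le_less_trans)
    then show "0 < g i\<sigma> 0"
      using sol i\<sigma> by (simp add: g_def is_solution_def)
  next
    fix t i\<sigma> assume t: "0 < t" and "i\<sigma> \<in> I"
      and all_nonneg: "\<forall>j\<in>I. 0 \<le> g j t" and touch: "g i\<sigma> t = 0"
    then obtain i \<sigma> where i\<sigma>: "i\<sigma> = (i, \<sigma>)" "i < r" "\<sigma> \<in> {-1, 1}" by (auto simp: I_def)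
    define s where "s = K * exp (- c * t)"
    have "0 < s" using \<open>0 < K\<close> by (simp add: s_def)
    have "s \<le> K" using \<open>0 < K\<close> c_pos t by (simp add: s_def)
    have "\<bar>y t j - eq_point j\<bar> \<le> s * v j" if "j < r" for j
      using all_nonneg that by (auto simp: I_def g_def s_def abs_le_iff algebra_simps)
    moreover have "\<sigma> * (y t i - eq_point i) = s * v i"
      using touch i\<sigma>(1) by (simp add: g_def s_def algebra_simps)
    ultimately have "\<sigma> * vfield r \<alpha> m (y t) i < - c * s * v i"
      using inward_on_box_faces \<open>0 < s\<close> \<open>s \<le> K\<close> \<open>K < \<rho>\<close> i\<sigma> by simp
    then show "\<exists>D>0. (g i\<sigma> has_real_derivative D) (at t within {0..})"
      using g_deriv[of i t \<sigma>] i\<sigma> t by (intro exI[of _ "- c * s * v i - \<sigma> * vfield r \<alpha> m (y t) i"]) (auto simp: s_def)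
  qed
  then show ?thesis
    by (auto simp: I_def g_def abs_less_iff algebra_simps)
qed

lemma solution_decays:
  assumes "distr r x0 eq_point < \<rho> / 2 * Min (v ` {..<r})"
    and sol: "is_solution r \<alpha> m x0 y" and "0 \<le> t"
  shows "distr r (y t) eq_point < \<rho> / 2 * (\<Sum>i<r. v i) * exp (- c * t)"
proof -
  have init: "\<forall>i<r. \<bar>x0 i - eq_point i\<bar> < \<rho> / 2 * v i"
  proof (intro allI impI)
    fix i assume "i < r"
    then have "\<rho> / 2 * Min (v ` {..<r}) \<le> \<rho> / 2 * v i"
      using \<rho>_pos by (intro mult_left_mono Min_le) auto
    then show "\<bar>x0 i - eq_point i\<bar> < \<rho> / 2 * v i"
      using distr_coord_le[OF \<open>i < r\<close>, of x0 eq_point] assms(1) by simp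
  qed
  have box: "\<forall>t\<ge>0. \<forall>i<r. \<bar>y t i - eq_point i\<bar> < \<rho> / 2 * v i * exp (- c * t)"
    using solution_in_shrinking_box[of "\<rho> / 2" x0 y] sol init \<rho>_pos by simp
  have "distr r (y t) eq_point \<le> (\<Sum>i<r. \<bar>y t i - eq_point i\<bar>)"
    by (rule distr_le_sum_abs)
  also have "\<dots> < (\<Sum>i<r. \<rho> / 2 * v i * exp (- c * t))"
    using box \<open>0 \<le> t\<close> lessThan_r_nonempty by (intro sum_strict_mono) auto
  finally show ?thesis
    by (simp add: sum_distrib_left sum_distrib_right mult.assoc)
qed

lemma asymp_stable_eq_point: "asymp_stable r \<alpha> m eq_point"
  unfolding asymp_stable_def
proof (rule exI[of _ "\<rho> / 2 * Min (v ` {..<r})"], intro conjI allI impI)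
  show "0 < \<rho> / 2 * Min (v ` {..<r})"
    using \<rho>_pos v_pos lessThan_r_nonempty by simp
  fix \<epsilon> :: real assume "0 < \<epsilon>"
  have "0 \<le> \<rho> / 2 * (\<Sum>i<r. v i)"
    using \<rho>_pos v_pos by (simp add: less_imp_le sum_nonneg)
  then obtain T where "0 \<le> T" and T: "\<forall>t\<ge>T. \<rho> / 2 * (\<Sum>i<r. v i) * exp (- c * t) < \<epsilon>"
    using exp_decay_eventually_less[OF c_pos \<open>0 < \<epsilon>\<close>] by blast
  show "\<exists>T. \<forall>x0 y. distr r x0 eq_point < \<rho> / 2 * Min (v ` {..<r}) \<longrightarrow>
      is_solution r \<alpha> m x0 y \<longrightarrow> (\<forall>t\<ge>T. distr r (y t) eq_point < \<epsilon>)"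
  proof (intro exI[of _ T] allI impI)
    fix x0 y t assume "distr r x0 eq_point < \<rho> / 2 * Min (v ` {..<r})"
      and "is_solution r \<alpha> m x0 y" and "T \<le> t"
    then have "distr r (y t) eq_point < \<rho> / 2 * (\<Sum>i<r. v i) * exp (- c * t)"
      using solution_decays \<open>0 \<le> T\<close> by simp
    also have "\<dots> < \<epsilon>"
      using T \<open>T \<le> t\<close> by simp
    finally show "distr r (y t) eq_point < \<epsilon>" .
  qed
qed

end

locale hill_unstable_rate = hill_equilibrium +
  fixes D \<eta> \<rho> c :: real
  assumes linearization:
      "\<And>w. \<bar>w - z\<bar> < \<rho> \<Longrightarrow> \<bar>hillf m w - hillf m z - D * (w - z)\<bar> \<le> \<eta> * \<bar>w - z\<bar>"
    and \<rho>_pos: "0 < \<rho>" and c_pos: "0 < c" and gain_pos: "0 < D - \<eta>"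
    and gain_gap: "(\<alpha> 0 + c) * V0 r (\<lambda>j. \<alpha> j + 2 * c) 0 < D - \<eta>"
begin

abbreviation v :: "nat \<Rightarrow> real" where
  "v \<equiv> V0 r (\<lambda>j. \<alpha> j + 2 * c)"

lemma v_pos: "0 < v i"
  using \<alpha>_pos c_pos by (intro V0_pos) auto

lemma outward_on_cone_faces:
  assumes "0 < s" and near: "\<bar>x (r - 1) - z\<bar> < \<rho>"
    and cone: "\<forall>j<r. s * v j \<le> x j - eq_point j"
    and face: "i < r" "x i - eq_point i = s * v i"
  shows "c * s * v i < vfield r \<alpha> m x i"
proof (cases "i = 0")
  case True
  define e where "e = x (r - 1) - z"
  have "s \<le> e"
    using cone[rule_format, of "r - 1"] r_ge_2 eq_point_last V0_last[of r] by (simp add: e_def)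
  have "\<bar>hillf m (x (r - 1)) - hillf m z - D * e\<bar> \<le> \<eta> * e"
    using linearization[of "x (r - 1)"] near \<open>0 < s\<close> \<open>s \<le> e\<close> by (simp add: e_def)
  then have "(D - \<eta>) * e \<le> hillf m (x (r - 1)) - hillf m z"
    by (simp add: abs_le_iff algebra_simps)
  moreover have "(D - \<eta>) * s \<le> (D - \<eta>) * e"
    using gain_pos \<open>s \<le> e\<close> by (intro mult_left_mono) auto
  moreover have "(\<alpha> 0 + c) * v 0 * s < (D - \<eta>) * s"
    using gain_gap \<open>0 < s\<close> by simp
  moreover have "vfield r \<alpha> m x i = (hillf m (x (r - 1)) - hillf m z) - \<alpha> 0 * (s * v 0)"
    using face(2) True by (simp add: vfield_0_eq)
  ultimately show ?thesis
    using True by (simp add: algebra_simps)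
next
  case False
  then have i: "1 \<le> i" "i < r" using face by auto
  have "vfield r \<alpha> m x i = (x (i - 1) - eq_point (i - 1)) - \<alpha> i * (s * v i)"
    using face(2) by (simp add: vfield_succ_eq[OF i])
  also have "\<dots> \<ge> s * v (i - 1) - \<alpha> i * (s * v i)"
    using cone i by simp
  also have "s * v (i - 1) - \<alpha> i * (s * v i) = 2 * (c * s * v i)"
    by (subst V0_step[OF i]) (simp add: algebra_simps)
  moreover have "0 < c * s * v i"
    using c_pos \<open>0 < s\<close> v_pos[of i] by simp
  ultimately show ?thesis
    by linarith
qed

lemma solution_in_expanding_cone:
  assumes "0 < s"
    and sol: "is_solution r \<alpha> m x0 y"
    and init: "\<forall>i<r. s * v i < x0 i - eq_point i"
    and near: "\<forall>t\<ge>0. \<bar>y t (r - 1) - z\<bar> < \<rho>"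
  shows "\<forall>t\<ge>0. \<forall>i<r. s * v i * exp (c * t) < y t i - eq_point i"
proof -
  define g where "g i t = y t i - eq_point i - s * v i * exp (c * t)" for i t
  have g_deriv: "(g i has_real_derivative vfield r \<alpha> m (y t) i - c * (s * exp (c * t)) * v i)
      (at t within {0..})" if "i < r" "0 \<le> t" for i t
  proof -
    have "((\<lambda>s. y s i) has_real_derivative vfield r \<alpha> m (y t) i) (at t within {0..})"
      using sol that by (simp add: is_solution_def)
    then show ?thesis
      unfolding g_def by (auto intro!: derivative_eq_intros simp: algebra_simps)
  qed
  have "\<forall>t\<ge>0. \<forall>i\<in>{..<r}. 0 < g i t"
  proof (rule barrier_stays_positive)
    fix i assume "i \<in> {..<r}"
    then show "continuous_on {0..} (g i)"
      using g_deriv by (intro DERIV_continuous_on) auto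
    show "0 < g i 0"
      using sol init \<open>i \<in> {..<r}\<close> by (simp add: g_def is_solution_def)
  next
    fix t i assume t: "0 < t" and i: "i \<in> {..<r}"
      and all_nonneg: "\<forall>j\<in>{..<r}. 0 \<le> g j t" and touch: "g i t = 0"
    define \<mu> where "\<mu> = s * exp (c * t)"
    have "0 < \<mu>" using \<open>0 < s\<close> by (simp add: \<mu>_def)
    moreover have "\<forall>j<r. \<mu> * v j \<le> y t j - eq_point j"
      using all_nonneg by (auto simp: g_def \<mu>_def algebra_simps)
    moreover have "y t i - eq_point i = \<mu> * v i"
      using touch by (simp add: g_def \<mu>_def algebra_simps)
    ultimately have "c * \<mu> * v i < vfield r \<alpha> m (y t) i"
      using outward_on_cone_faces near t i by simp
    then show "\<exists>D>0. (g i has_real_derivative D) (at t within {0..})"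
      using g_deriv[of i t] i t by (intro exI[of _ "vfield r \<alpha> m (y t) i - c * \<mu> * v i"]) (auto simp: \<mu>_def)
  qed simp
  then show ?thesis
    by (auto simp: g_def algebra_simps)
qed

lemma solution_leaves_neighbourhood:
  assumes "0 < s" and sol: "is_solution r \<alpha> m x0 y"
    and init: "\<forall>i<r. s * v i < x0 i - eq_point i"
  shows "\<exists>t\<ge>0. \<rho> \<le> \<bar>y t (r - 1) - z\<bar>"
proof (rule ccontr)
  assume "\<not> ?thesis"
  then have near: "\<forall>t\<ge>0. \<bar>y t (r - 1) - z\<bar> < \<rho>"
    by (metis not_le)
  have cone: "\<forall>t\<ge>0. \<forall>i<r. s * v i * exp (c * t) < y t i - eq_point i"
    using solution_in_expanding_cone[OF \<open>0 < s\<close> sol init near] .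
  define t where "t = \<rho> / (s * c)"
  have "0 \<le> t"
    using \<rho>_pos \<open>0 < s\<close> c_pos by (simp add: t_def)
  have "\<rho> = s * (c * t)"
    using \<open>0 < s\<close> c_pos by (simp add: t_def)
  also have "\<dots> < s * exp (c * t)"
    using \<open>0 < s\<close> exp_ge_add_one_self[of "c * t"] by (intro mult_strict_left_mono) linarith+
  also have "\<dots> = s * v (r - 1) * exp (c * t)"
    using V0_last[of r] r_ge_2 by simp
  also have "\<dots> < y t (r - 1) - eq_point (r - 1)"
    using cone \<open>0 \<le> t\<close> r_ge_2 by simp
  also have "\<dots> = y t (r - 1) - z"
    using V0_last[of r \<alpha>] r_ge_2 by simp
  finally show False
    using near \<open>0 \<le> t\<close> by (auto simp: abs_less_iff)
qed

lemma unstable_eq_point: "unstable r \<alpha> m eq_point"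
  unfolding unstable_def lyap_stable_def
proof
  assume "\<forall>\<epsilon>>0. \<exists>\<delta>>0. \<forall>x0 y. distr r x0 eq_point < \<delta> \<longrightarrow> is_solution r \<alpha> m x0 y \<longrightarrow>
      (\<forall>t\<ge>0. distr r (y t) eq_point < \<epsilon>)"
  then obtain \<delta> where "0 < \<delta>" and bounded: "\<And>x0 y. distr r x0 eq_point < \<delta> \<Longrightarrow>
      is_solution r \<alpha> m x0 y \<Longrightarrow> \<forall>t\<ge>0. distr r (y t) eq_point < \<rho>"
    using \<rho>_pos by blast
  define S where "S = (\<Sum>i<r. v i)"
  define s where "s = \<delta> / (2 * S + 1)"
  define x0 where "x0 i = eq_point i + 2 * s * v i" for i
  have "0 < S"
    using v_pos lessThan_r_nonempty unfolding S_def by (intro sum_pos) auto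
  then have "0 < s"
    using \<open>0 < \<delta>\<close> by (simp add: s_def)
  have "2 * S / (2 * S + 1) < 1"
    using \<open>0 < S\<close> by (simp add: divide_less_eq)
  have "distr r x0 eq_point \<le> (\<Sum>i<r. \<bar>x0 i - eq_point i\<bar>)"
    by (rule distr_le_sum_abs)
  also have "\<dots> = 2 * s * S"
    using \<open>0 < s\<close> v_pos by (simp add: x0_def S_def sum_distrib_left abs_of_pos)
  also have "\<dots> = \<delta> * (2 * S / (2 * S + 1))"
    by (simp add: s_def)
  also have "\<dots> < \<delta>"
    using mult_strict_left_mono[OF \<open>2 * S / (2 * S + 1) < 1\<close> \<open>0 < \<delta>\<close>] by simp
  finally have "distr r x0 eq_point < \<delta>" .
  obtain y where sol: "is_solution r \<alpha> m x0 y"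
    using is_solution_exists r_ge_2 m_ge_1 by fastforce
  obtain t where "0 \<le> t" "\<rho> \<le> \<bar>y t (r - 1) - z\<bar>"
    using solution_leaves_neighbourhood[OF \<open>0 < s\<close> sol] \<open>0 < s\<close> v_pos by (auto simp: x0_def)
  moreover have "\<bar>y t (r - 1) - z\<bar> \<le> distr r (y t) eq_point"
    using distr_coord_le[of "r - 1" r "y t" eq_point] V0_last[of r \<alpha>] r_ge_2 by simp
  moreover have "distr r (y t) eq_point < \<rho>"
    using bounded[OF \<open>distr r x0 eq_point < \<delta>\<close> sol] \<open>0 \<le> t\<close> by blast
  ultimately show False
    by linarith
qed

end

context hill_equilibrium
begin

lemma hill_stable_rate_exists:
  assumes deriv: "(hillf m has_real_derivative D) (at z)" and less: "D < (\<Prod>i<r. \<alpha> i)"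
  shows "\<exists>\<eta> \<rho> c. hill_stable_rate r \<alpha> m z D \<eta> \<rho> c"
proof -
  define \<eta> where "\<eta> = ((\<Prod>i<r. \<alpha> i) - D) / 2"
  have "0 < \<eta>" "D + \<eta> < (\<Prod>i<r. \<alpha> i)"
    using less by (simp_all add: \<eta>_def field_simps)
  obtain \<rho> where "0 < \<rho>"
    and lin: "\<And>w. \<bar>w - z\<bar> < \<rho> \<Longrightarrow> \<bar>hillf m w - hillf m z - D * (w - z)\<bar> \<le> \<eta> * \<bar>w - z\<bar>"
    using linearization_bound[OF deriv \<open>0 < \<eta>\<close>] by blast
  obtain c' where "0 < c'" "\<forall>j<r. c' < \<alpha> j" "D + \<eta> < (\<Prod>j<r. \<alpha> j - c')"
    using exists_shift_prod_greater[OF \<alpha>_pos \<open>D + \<eta> < _\<close>] by blast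
  define c where "c = c' / 2"
  have "0 < V0 r (\<lambda>j. \<alpha> j - 2 * c) 0"
    using \<open>\<forall>j<r. c' < \<alpha> j\<close> by (intro V0_pos) (auto simp: c_def)
  then have "(\<alpha> 0 - 2 * c) * V0 r (\<lambda>j. \<alpha> j - 2 * c) 0 \<le> (\<alpha> 0 - c) * V0 r (\<lambda>j. \<alpha> j - 2 * c) 0"
    using \<open>0 < c'\<close> by (intro mult_right_mono) (auto simp: c_def)
  then have "(\<Prod>j<r. \<alpha> j - 2 * c) \<le> (\<alpha> 0 - c) * V0 r (\<lambda>j. \<alpha> j - 2 * c) 0"
    using V0_0[of r "\<lambda>j. \<alpha> j - 2 * c"] r_ge_2 by simp
  then have "hill_stable_rate r \<alpha> m z D \<eta> \<rho> c"
    using lin hillf_deriv_nonneg[OF m_ge_1 deriv] \<open>0 < \<rho>\<close> \<open>0 < \<eta>\<close> \<open>0 < c'\<close>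
      \<open>\<forall>j<r. c' < \<alpha> j\<close> \<open>D + \<eta> < (\<Prod>j<r. \<alpha> j - c')\<close>
    by unfold_locales (auto simp: c_def)
  then show ?thesis by blast
qed

lemma hill_unstable_rate_exists:
  assumes deriv: "(hillf m has_real_derivative D) (at z)" and greater: "(\<Prod>i<r. \<alpha> i) < D"
  shows "\<exists>\<eta> \<rho> c. hill_unstable_rate r \<alpha> m z D \<eta> \<rho> c"
proof -
  define \<eta> where "\<eta> = (D - (\<Prod>i<r. \<alpha> i)) / 2"
  have "0 < \<eta>" "(\<Prod>i<r. \<alpha> i) < D - \<eta>"
    using greater by (simp_all add: \<eta>_def field_simps)
  moreover have "0 < (\<Prod>i<r. \<alpha> i)"
    using \<alpha>_pos by (intro prod_pos) auto
  ultimately have "0 < D - \<eta>" by linarith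
  obtain \<rho> where "0 < \<rho>"
    and lin: "\<And>w. \<bar>w - z\<bar> < \<rho> \<Longrightarrow> \<bar>hillf m w - hillf m z - D * (w - z)\<bar> \<le> \<eta> * \<bar>w - z\<bar>"
    using linearization_bound[OF deriv \<open>0 < \<eta>\<close>] by blast
  obtain c' where "0 < c'" "(\<Prod>j<r. \<alpha> j + c') < D - \<eta>"
    using exists_shift_prod_less[OF \<open>(\<Prod>i<r. \<alpha> i) < D - \<eta>\<close>] by blast
  define c where "c = c' / 2"
  have "0 < V0 r (\<lambda>j. \<alpha> j + 2 * c) 0"
    using \<alpha>_pos \<open>0 < c'\<close> by (intro V0_pos) (auto simp: c_def)
  then have "(\<alpha> 0 + c) * V0 r (\<lambda>j. \<alpha> j + 2 * c) 0 \<le> (\<alpha> 0 + 2 * c) * V0 r (\<lambda>j. \<alpha> j + 2 * c) 0"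
    using \<open>0 < c'\<close> by (intro mult_right_mono) (auto simp: c_def)
  then have "(\<alpha> 0 + c) * V0 r (\<lambda>j. \<alpha> j + 2 * c) 0 \<le> (\<Prod>j<r. \<alpha> j + 2 * c)"
    using V0_0[of r "\<lambda>j. \<alpha> j + 2 * c"] r_ge_2 by simp
  then have "hill_unstable_rate r \<alpha> m z D \<eta> \<rho> c"
    using lin \<open>0 < \<rho>\<close> \<open>0 < D - \<eta>\<close> \<open>0 < c'\<close> \<open>(\<Prod>j<r. \<alpha> j + c') < D - \<eta>\<close>
    by unfold_locales (auto simp: c_def)
  then show ?thesis by blast
qed

end

theorem lemma6p2:
  fixes r :: nat and \<alpha> :: "nat \<Rightarrow> real" and m z :: real
  assumes "r \<ge> 2" and "\<forall>i<r. \<alpha> i > 0" and "m \<ge> 1"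
    and "z \<noteq> 0" and "hfun m z = (\<Prod>i<r. \<alpha> i)"
  shows "(z > 0 \<longrightarrow>
            (deriv (hfun m) z < 0 \<longrightarrow> asymp_stable r \<alpha> m (\<lambda>i. z * V0 r \<alpha> i)) \<and>
            (deriv (hfun m) z > 0 \<longrightarrow> unstable r \<alpha> m (\<lambda>i. z * V0 r \<alpha> i)))
       \<and> (z < 0 \<longrightarrow>
            (deriv (hfun m) z > 0 \<longrightarrow> asymp_stable r \<alpha> m (\<lambda>i. z * V0 r \<alpha> i)) \<and>
            (deriv (hfun m) z < 0 \<longrightarrow> unstable r \<alpha> m (\<lambda>i. z * V0 r \<alpha> i)))"
proof -
  obtain D where deriv: "(hillf m has_real_derivative D) (at z)"
    using hillf_differentiable[OF assms(4)] by blast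
  have equilibrium: "hillf m z = (\<Prod>i<r. \<alpha> i) * z"
    using assms(4,5) by (simp add: hfun_def field_simps)
  interpret hill_equilibrium r \<alpha> m z
    using assms(1-3) equilibrium by unfold_locales
  have stable: "asymp_stable r \<alpha> m (\<lambda>i. z * V0 r \<alpha> i)" if "D < (\<Prod>i<r. \<alpha> i)"
    using hill_stable_rate_exists[OF deriv that] hill_stable_rate.asymp_stable_eq_point by blast
  have unstable: "unstable r \<alpha> m (\<lambda>i. z * V0 r \<alpha> i)" if "(\<Prod>i<r. \<alpha> i) < D"
    using hill_unstable_rate_exists[OF deriv that] hill_unstable_rate.unstable_eq_point by blast
  have "deriv (hfun m) z = (D - (\<Prod>i<r. \<alpha> i)) * z / (z * z)"
    using hfun_deriv[OF assms(4) deriv] equilibrium by (simp add: left_diff_distrib)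
  also have "\<dots> = (D - (\<Prod>i<r. \<alpha> i)) / z"
    using assms(4) by simp
  finally have "deriv (hfun m) z = (D - (\<Prod>i<r. \<alpha> i)) / z" .
  then show ?thesis
    using stable unstable by (auto simp: divide_less_0_iff zero_less_divide_iff)
qed

end
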